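(* Let \[ G(z)=\sum_{n=0}^{\infty}\binom{3n}{n}\frac{2z^n}{n+1}. \] Then for every complex $z$ with $|z|<4/27$, \[ G(z)=\frac{12\cos^2\alpha+6}{\left(4\cos^2\alpha-1\right)^2},\qquad \alpha=\frac{1}{3}\arcsin\left(\sqrt{27z/4}\right), \] where $\arcsin$ denotes the principal branch on the unit disc. The choice of square root does not matter, since $w\mapsto\cos\left(\tfrac13\arcsin w\right)$ is even. *)

theory Defs
  imports "HOL-Analysis.Analysis"
begin

end

theory Submission
  imports Defs "HOL-Real_Asymp.Real_Asymp"
begin

(*
  Write D(z) = \<Sum> (3n choose n) z^n, T(z) = \<Sum> (3n choose n)/(2n+1) z^n, and note that
  z G(z) has derivative 2 D(z). The recurrence for (3n choose n) makes D and T satisfy two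
  first-order linear relations. Under the substitution z = 4 sin\<^sup>2 x / 27 these become the
  system y' = q, q' = -y/9 for y = D(z) cos x and q = -sin x T(z)/9, with y(0) = 1 and
  q(0) = 0; hence D(z) cos x = cos (x/3). Then d/dx (z G(z)) = (16/27) sin x cos (x/3), which
  integrates to 2/9 (1 - cos (4x/3)) + 4/9 (1 - cos (2x/3)), and putting x = 3\<alpha> gives the
  closed form. The argument runs along the segment from 0 to Arcsin (\<surd>(27z/4)), on which
  |sin| < 1 keeps z inside the disc of convergence.
*)

lemma choose_3n_Suc:
  "2 * (n + 1) * (2 * n + 1) * (3 * (n + 1) choose (n + 1))
     = 3 * (3 * n + 1) * (3 * n + 2) * (3 * n choose n)"
proof -
  define m where "m = 3 * n"
  have absorb3: "(n + 1) * (m + 3 choose (n + 1)) = (m + 3) * (m + 2 choose n)"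
    using binomial_absorption[of n "m + 3"]
    by (simp add: eval_nat_numeral del: binomial_Suc_Suc)
  have absorb2: "(2 * n + 2) * (m + 2 choose n) = (m + 2) * (m + 1 choose n)"
    using binomial_absorb_comp[of "m + 2" n]
    by (simp add: m_def eval_nat_numeral del: binomial_Suc_Suc)
  have absorb1: "(2 * n + 1) * (m + 1 choose n) = (m + 1) * (m choose n)"
    using binomial_absorb_comp[of "m + 1" n] by (simp add: m_def del: binomial_Suc_Suc)
  have "2 * (n + 1) * (2 * n + 1) * (3 * (n + 1) choose (n + 1))
      = 2 * (2 * n + 1) * ((n + 1) * (m + 3 choose (n + 1)))"
    by (simp add: m_def algebra_simps del: binomial_Suc_Suc)
  also have "\<dots> = 3 * (2 * n + 1) * ((2 * n + 2) * (m + 2 choose n))"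
    unfolding absorb3 by (simp add: m_def algebra_simps del: binomial_Suc_Suc)
  also have "\<dots> = 3 * (m + 2) * ((2 * n + 1) * (m + 1 choose n))"
    unfolding absorb2 by (simp only: ac_simps)
  also have "\<dots> = 3 * (3 * n + 1) * (3 * n + 2) * (3 * n choose n)"
    unfolding absorb1 by (simp add: m_def algebra_simps del: binomial_Suc_Suc)
  finally show ?thesis .
qed

lemma choose_3n_Suc_of_nat:
  "2 * (of_nat n + 1) * (2 * of_nat n + 1) * of_nat (3 * (n + 1) choose (n + 1))
     = 3 * (3 * of_nat n + 1) * (3 * of_nat n + 2) * (of_nat (3 * n choose n) :: 'a :: semiring_1)"
  using choose_3n_Suc[THEN arg_cong[where f = "of_nat :: nat \<Rightarrow> 'a"]]
  by (simp only: of_nat_mult of_nat_add of_nat_numeral of_nat_1)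

lemma choose_3n_ratio:
  "real (3 * n choose n) / real (3 * Suc n choose Suc n)
     = 2 * (real n + 1) * (2 * real n + 1) / (3 * (3 * real n + 1) * (3 * real n + 2))"
proof -
  have "3 * Suc n choose Suc n > 0" by simp
  with choose_3n_Suc_of_nat[of n, where ?'a = real] show ?thesis
    by (simp add: divide_simps del: binomial_Suc_Suc of_nat_Suc)
qed

lemma of_nat_odd_neq_0: "2 * of_nat n + 1 \<noteq> (0 :: 'a :: semiring_char_0)"
  using of_nat_neq_0[of "2 * n", where ?'a = 'a] by (simp add: add.commute)

lemma fps_X_mult_deriv_nth:
  "fps_nth (fps_X * fps_deriv f) n = of_nat n * fps_nth f n"
  by (cases n) simp_all

lemma fps_conv_radius_numeral_mult [simp]:
  "fps_conv_radius (numeral k * f :: 'a :: {real_normed_field, banach} fps) = fps_conv_radius f"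
  by (simp add: numeral_fps_const fps_conv_radius_cmult_left)

lemma fps_conv_radius_fps_X_mult [simp]:
  "fps_conv_radius (fps_X * f :: 'a :: {real_normed_field, banach} fps) = fps_conv_radius f"
proof -
  have "fps_conv_radius (fps_X * f) = conv_radius (\<lambda>n. fps_nth (fps_X * f) (n + 1))"
    unfolding fps_conv_radius_def by (rule conv_radius_shift [symmetric])
  then show ?thesis by (simp add: fps_conv_radius_def)
qed

lemma eval_fps_numeral_mult:
  fixes f :: "'a :: {real_normed_field, banach} fps"
  assumes "norm z < fps_conv_radius f"
  shows "eval_fps (numeral k * f) z = numeral k * eval_fps f z"
  using assms by (simp add: eval_fps_mult)

lemma eval_fps_fps_X_mult:
  fixes f :: "'a :: {real_normed_field, banach} fps"
  assumes "norm z < fps_conv_radius f"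
  shows "eval_fps (fps_X * f) z = z * eval_fps f z"
  using assms by (simp add: eval_fps_mult)

lemma harmonic_oscillator_solution:
  fixes y q :: "'a :: {real_normed_field, banach} \<Rightarrow> 'a"
  assumes "convex S" "0 \<in> S" "x \<in> S"
    and y': "\<And>v. v \<in> S \<Longrightarrow> (y has_field_derivative q v) (at v within S)"
    and q': "\<And>v. v \<in> S \<Longrightarrow> (q has_field_derivative - (w\<^sup>2 * y v)) (at v within S)"
  shows "w * y x = w * y 0 * cos (w * x) + q 0 * sin (w * x)"
proof -
  define E where "E v = w * y v * cos (w * v) - q v * sin (w * v)" for v
  define F where "F v = w * y v * sin (w * v) + q v * cos (w * v)" for v
  have "(E has_field_derivative 0) (at v within S)" "(F has_field_derivative 0) (at v within S)"
    if "v \<in> S" for v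
  proof -
    have s: "((\<lambda>v. sin (w * v)) has_field_derivative w * cos (w * v)) (at v within S)"
      and c: "((\<lambda>v. cos (w * v)) has_field_derivative - (w * sin (w * v))) (at v within S)"
      by (auto intro!: derivative_eq_intros)
    note wy' = DERIV_cmult[where c = w, OF y'[OF that]]
    show "(E has_field_derivative 0) (at v within S)"
      unfolding E_def using DERIV_diff[OF DERIV_mult[OF wy' c] DERIV_mult[OF q'[OF that] s]]
      by (simp add: power2_eq_square algebra_simps)
    show "(F has_field_derivative 0) (at v within S)"
      unfolding F_def using DERIV_add[OF DERIV_mult[OF wy' s] DERIV_mult[OF q'[OF that] c]]
      by (simp add: power2_eq_square algebra_simps)
  qed
  then obtain e f where "\<forall>v\<in>S. E v = e" "\<forall>v\<in>S. F v = f"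
    using has_field_derivative_zero_constant[OF \<open>convex S\<close>] by metis
  then have "E x = w * y 0" "F x = q 0"
    using assms(2,3) by (force simp: E_def F_def)+
  moreover have "w * y x = E x * cos (w * x) + F x * sin (w * x)"
    unfolding E_def F_def using sin_cos_squared_add[of "w * x"] by algebra
  ultimately show ?thesis
    by simp
qed

lemma sin_add_sin_third:
  fixes x :: "'a :: {real_normed_field, banach}"
  shows "sin (4 * x / 3) + sin (2 * x / 3) = 2 * sin x * cos (x / 3)"
proof -
  have "4 * x / 3 = x + x / 3" "2 * x / 3 = x - x / 3"
    by (simp_all add: field_simps)
  then show ?thesis
    by (simp only: sin_add sin_diff) simp
qed

lemma sin_triple:
  fixes a :: "'a :: {real_normed_field, banach}"
  shows "sin (3 * a) = sin a * (4 * (cos a)\<^sup>2 - 1)"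
proof -
  have "sin (3 * a) = sin (2 * a + a)"
    by simp
  also have "\<dots> = 2 * sin a * cos a * cos a + (2 * (cos a)\<^sup>2 - 1) * sin a"
    by (simp only: sin_add sin_double cos_double_cos)
  also have "\<dots> = sin a * (4 * (cos a)\<^sup>2 - 1)"
    by (simp add: algebra_simps power2_eq_square)
  finally show ?thesis .
qed

lemma norm_sin_scaleR_le:
  fixes z :: complex
  assumes "0 \<le> u" "u \<le> 1" "\<bar>Re z\<bar> \<le> pi / 2"
  shows "norm (sin (u *\<^sub>R z)) \<le> norm (sin z)"
proof -
  have exp_cosh: "exp t + inverse (exp t) = 2 * cosh t" for t :: real
    by (simp add: cosh_def exp_minus)
  have "cos (2 * Re z) \<le> cos (2 * (u * Re z))"
  proof -
    have "\<bar>u * Re z\<bar> \<le> \<bar>Re z\<bar>"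
      using assms(1,2) by (simp add: abs_mult mult_left_le_one_le)
    then have "cos \<bar>2 * Re z\<bar> \<le> cos \<bar>2 * (u * Re z)\<bar>"
      using assms(3) by (intro cos_monotone_0_pi_le) auto
    then show ?thesis
      by simp
  qed
  moreover have "cosh (2 * (u * Im z)) \<le> cosh (2 * Im z)"
  proof -
    have "\<bar>u * Im z\<bar> \<le> \<bar>Im z\<bar>"
      using assms(1,2) by (simp add: abs_mult mult_left_le_one_le)
    then have "cosh \<bar>2 * (u * Im z)\<bar> \<le> cosh \<bar>2 * Im z\<bar>"
      by (subst cosh_real_nonneg_le_iff) auto
    then show ?thesis
      by simp
  qed
  ultimately have "norm (sin (u *\<^sub>R z)) ^ 2 \<le> norm (sin z) ^ 2"
    by (simp add: norm_sin_squared exp_cosh)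
  then show ?thesis
    by (simp add: power2_le_iff_abs_le)
qed

lemma norm_sin_closed_segment_Arcsin:
  assumes "norm w < 1" "v \<in> closed_segment 0 (Arcsin w)"
  shows "norm (sin v) < 1"
proof -
  obtain u where u: "0 \<le> u" "u \<le> 1" "v = u *\<^sub>R Arcsin w"
    using assms(2) by (auto simp: closed_segment_def)
  have "\<bar>Re w\<bar> < 1"
    using abs_Re_le_cmod[of w] assms(1) by linarith
  then have "\<bar>Re (Arcsin w)\<bar> \<le> pi / 2"
    using Arcsin_bounds less_imp_le by blast
  then have "norm (sin v) \<le> norm w"
    using norm_sin_scaleR_le[OF u(1,2)] u(3) by (metis sin_Arcsin)
  then show ?thesis
    using assms(1) by linarith
qed

definition choose_3n_fps :: "'a :: field_char_0 fps" where
  "choose_3n_fps = Abs_fps (\<lambda>n. of_nat (3 * n choose n))"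

definition ternary_fps :: "'a :: field_char_0 fps" where
  "ternary_fps = Abs_fps (\<lambda>n. of_nat (3 * n choose n) / of_nat (2 * n + 1))"

definition G_fps :: "'a :: field_char_0 fps" where
  "G_fps = Abs_fps (\<lambda>n. 2 * of_nat (3 * n choose n) / of_nat (n + 1))"

lemma ternary_fps_eq_choose_3n_fps:
  "3 * ternary_fps + 8 * fps_deriv choose_3n_fps
     = 27 * choose_3n_fps + 54 * (fps_X * fps_deriv choose_3n_fps)" (is "?l = ?r")
proof (rule fps_ext)
  fix n
  define d where "d = (\<lambda>n. of_nat (3 * n choose n) :: 'a)"
  have "2 * (of_nat n + 1) * (2 * of_nat n + 1) * d (n + 1)
      = 3 * (3 * of_nat n + 1) * (3 * of_nat n + 2) * d n"
    unfolding d_def by (rule choose_3n_Suc_of_nat)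
  then have "(27 * d n + 54 * of_nat n * d n - 8 * (of_nat n + 1) * d (n + 1)) * (2 * of_nat n + 1)
      = 3 * d n"
    by algebra
  then have "3 * d n / (2 * of_nat n + 1)
      = 27 * d n + 54 * of_nat n * d n - 8 * (of_nat n + 1) * d (n + 1)"
    using of_nat_odd_neq_0[of n, where ?'a = 'a] by (simp add: divide_eq_eq)
  moreover have "fps_nth ?l n = 3 * d n / (2 * of_nat n + 1) + 8 * (of_nat n + 1) * d (n + 1)"
    by (simp add: ternary_fps_def choose_3n_fps_def d_def add.commute)
  moreover have "fps_nth ?r n = 27 * d n + 54 * of_nat n * d n"
    by (simp add: fps_X_mult_deriv_nth choose_3n_fps_def d_def del: fps_X_mult_nth)
  ultimately show "fps_nth ?l n = fps_nth ?r n"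
    by simp
qed

lemma choose_3n_fps_eq_ternary_fps:
  "choose_3n_fps = ternary_fps + 2 * (fps_X * fps_deriv ternary_fps)" (is "_ = ?r")
proof (rule fps_ext)
  fix n
  have "fps_nth ?r n = (2 * of_nat n + 1) * fps_nth ternary_fps n"
    by (simp add: fps_X_mult_deriv_nth del: fps_X_mult_nth) (simp add: algebra_simps)
  also have "\<dots> = fps_nth choose_3n_fps n"
    using of_nat_odd_neq_0[of n, where ?'a = 'a]
    by (simp add: choose_3n_fps_def ternary_fps_def add.commute)
  finally show "fps_nth choose_3n_fps n = fps_nth ?r n"
    by simp
qed

lemma fps_deriv_fps_X_mult_G_fps:
  "fps_deriv (fps_X * G_fps) = 2 * choose_3n_fps" (is "?l = _")
proof (rule fps_ext)
  fix n
  have "fps_nth ?l n = (of_nat n + 1) * fps_nth G_fps n"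
    by (simp add: algebra_simps)
  also have "\<dots> = fps_nth (2 * choose_3n_fps) n"
    using of_nat_neq_0[of n, where ?'a = 'a]
    by (simp add: G_fps_def choose_3n_fps_def numeral_fps_const add.commute)
  finally show "fps_nth ?l n = fps_nth (2 * choose_3n_fps) n" .
qed

lemma fps_conv_radius_choose_3n_fps:
  "fps_conv_radius (choose_3n_fps :: 'a :: {real_normed_field, banach} fps) = 4/27"
  unfolding fps_conv_radius_def
proof (rule conv_radius_ratio_limit_nonzero)
  have "(\<lambda>n. norm (fps_nth (choose_3n_fps :: 'a fps) n) / norm (fps_nth (choose_3n_fps :: 'a fps) (Suc n)))
      = (\<lambda>n. 2 * (real n + 1) * (2 * real n + 1) / (3 * (3 * real n + 1) * (3 * real n + 2)))"
    (is "?ratio = _")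
    by (simp only: choose_3n_fps_def fps_nth_Abs_fps norm_of_nat choose_3n_ratio)
  also have "\<dots> \<longlonglongrightarrow> 4/27"
    by real_asymp
  finally show "?ratio \<longlonglongrightarrow> 4/27" .
qed simp_all

lemma fps_conv_radius_ternary_fps:
  "fps_conv_radius (ternary_fps :: 'a :: {real_normed_field, banach} fps) = 4/27"
  unfolding fps_conv_radius_def
proof (rule conv_radius_ratio_limit_nonzero)
  have "(\<lambda>n. norm (fps_nth (ternary_fps :: 'a fps) n) / norm (fps_nth (ternary_fps :: 'a fps) (Suc n)))
      = (\<lambda>n. real (3 * n choose n) / real (3 * Suc n choose Suc n)
               * (real (2 * Suc n + 1) / real (2 * n + 1)))"
    (is "?ratio = _")
    by (simp only: ternary_fps_def fps_nth_Abs_fps norm_divide norm_of_nat)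
       (simp add: field_simps del: binomial_Suc_Suc of_nat_Suc)
  also have "\<dots> \<longlonglongrightarrow> 4/27"
    unfolding choose_3n_ratio by real_asymp
  finally show "?ratio \<longlonglongrightarrow> 4/27" .
qed simp_all

lemma fps_conv_radius_G_fps:
  "fps_conv_radius (G_fps :: 'a :: {real_normed_field, banach} fps) = 4/27"
  unfolding fps_conv_radius_def
proof (rule conv_radius_ratio_limit_nonzero)
  have "(\<lambda>n. norm (fps_nth (G_fps :: 'a fps) n) / norm (fps_nth (G_fps :: 'a fps) (Suc n)))
      = (\<lambda>n. real (3 * n choose n) / real (3 * Suc n choose Suc n)
               * (real (Suc n + 1) / real (n + 1)))"
    (is "?ratio = _")
    by (simp only: G_fps_def fps_nth_Abs_fps norm_divide norm_mult norm_of_nat)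
       (simp add: field_simps del: binomial_Suc_Suc of_nat_Suc)
  also have "\<dots> \<longlonglongrightarrow> 4/27"
    unfolding choose_3n_ratio by real_asymp
  finally show "?ratio \<longlonglongrightarrow> 4/27" .
qed simp_all

lemma norm_less_fps_conv_radius_choose_3n:
  fixes z :: "'a :: {real_normed_field, banach}"
  assumes "norm z < 4/27"
  shows "norm z < fps_conv_radius (choose_3n_fps :: 'a fps)"
    and "norm z < fps_conv_radius (fps_deriv (choose_3n_fps :: 'a fps))"
    and "norm z < fps_conv_radius (ternary_fps :: 'a fps)"
    and "norm z < fps_conv_radius (fps_deriv (ternary_fps :: 'a fps))"
    and "norm z < fps_conv_radius (G_fps :: 'a fps)"
proof -
  show D: "norm z < fps_conv_radius (choose_3n_fps :: 'a fps)"
    and T: "norm z < fps_conv_radius (ternary_fps :: 'a fps)"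
    and "norm z < fps_conv_radius (G_fps :: 'a fps)"
    using assms by (simp_all add: fps_conv_radius_choose_3n_fps fps_conv_radius_ternary_fps
        fps_conv_radius_G_fps)
  show "norm z < fps_conv_radius (fps_deriv (choose_3n_fps :: 'a fps))"
    using D fps_conv_radius_deriv by (rule order.strict_trans2)
  show "norm z < fps_conv_radius (fps_deriv (ternary_fps :: 'a fps))"
    using T fps_conv_radius_deriv by (rule order.strict_trans2)
qed

lemma eval_ternary_fps_eq_choose_3n_fps:
  fixes z :: "'a :: {real_normed_field, banach}"
  assumes "norm z < 4/27"
  shows "3 * eval_fps ternary_fps z + 8 * eval_fps (fps_deriv choose_3n_fps) z
       = 27 * eval_fps choose_3n_fps z + 54 * (z * eval_fps (fps_deriv choose_3n_fps) z)"
proof -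
  have "eval_fps (3 * ternary_fps + 8 * fps_deriv choose_3n_fps) z
      = eval_fps (27 * choose_3n_fps + 54 * (fps_X * fps_deriv choose_3n_fps)) z"
    by (simp only: ternary_fps_eq_choose_3n_fps)
  then show ?thesis
    using norm_less_fps_conv_radius_choose_3n[OF assms]
    by (simp add: eval_fps_add eval_fps_numeral_mult eval_fps_fps_X_mult)
qed

lemma eval_choose_3n_fps_eq_ternary_fps:
  fixes z :: "'a :: {real_normed_field, banach}"
  assumes "norm z < 4/27"
  shows "eval_fps choose_3n_fps z = eval_fps ternary_fps z + 2 * (z * eval_fps (fps_deriv ternary_fps) z)"
proof -
  have "eval_fps choose_3n_fps z = eval_fps (ternary_fps + 2 * (fps_X * fps_deriv ternary_fps)) z"
    by (simp only: choose_3n_fps_eq_ternary_fps [symmetric])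
  then show ?thesis
    using norm_less_fps_conv_radius_choose_3n[OF assms]
    by (simp add: eval_fps_add eval_fps_numeral_mult eval_fps_fps_X_mult)
qed

lemma norm_scaled_square_less:
  fixes s :: "'a :: real_normed_field"
  assumes "norm s < 1"
  shows "norm (4 * s\<^sup>2 / 27) < 4/27"
  using assms by (simp add: norm_divide norm_mult norm_power power_less_one_iff)

lemma has_field_derivative_eval_fps_sin_squared:
  fixes f :: "'a :: {real_normed_field, banach} fps"
  assumes "norm (4 * (sin v)\<^sup>2 / 27) < fps_conv_radius f"
  shows "((\<lambda>v. eval_fps f (4 * (sin v)\<^sup>2 / 27)) has_field_derivative
           eval_fps (fps_deriv f) (4 * (sin v)\<^sup>2 / 27) * (8/27 * sin v * cos v)) (at v within S)"
proof -
  have "((\<lambda>v. 4 * (sin v)\<^sup>2 / 27) has_field_derivative 8/27 * sin v * cos v) (at v within S)"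
    by (auto intro!: derivative_eq_intros simp: power2_eq_square)
  then show ?thesis
    by (rule DERIV_chain2[where g = "\<lambda>v. 4 * (sin v)\<^sup>2 / 27", OF has_field_derivative_eval_fps[OF assms]])
qed

lemma eval_choose_3n_fps_sin_squared:
  fixes x :: "'a :: {real_normed_field, banach}"
  assumes "convex S" "0 \<in> S" "x \<in> S" and sin_S: "\<And>v. v \<in> S \<Longrightarrow> norm (sin v) < 1"
  shows "eval_fps choose_3n_fps (4 * (sin x)\<^sup>2 / 27) * cos x = cos (x / 3)"
proof -
  define y where "y v = eval_fps choose_3n_fps (4 * (sin v)\<^sup>2 / 27) * cos v" for v :: 'a
  define q where "q v = - (sin v * eval_fps ternary_fps (4 * (sin v)\<^sup>2 / 27)) / 9" for v :: 'a
  have y': "(y has_field_derivative q v) (at v within S)" if "v \<in> S" for v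
  proof -
    note R = norm_less_fps_conv_radius_choose_3n[OF norm_scaled_square_less[OF sin_S[OF that]]]
    have "(y has_field_derivative
            eval_fps (fps_deriv choose_3n_fps) (4 * (sin v)\<^sup>2 / 27) * (8/27 * sin v * cos v) * cos v
            + (- sin v) * eval_fps choose_3n_fps (4 * (sin v)\<^sup>2 / 27)) (at v within S)"
      unfolding y_def
      by (intro DERIV_mult has_field_derivative_eval_fps_sin_squared R(1)
          has_field_derivative_at_within[OF DERIV_cos])
    moreover have "eval_fps (fps_deriv choose_3n_fps) (4 * (sin v)\<^sup>2 / 27) * (8/27 * sin v * cos v) * cos v
            + (- sin v) * eval_fps choose_3n_fps (4 * (sin v)\<^sup>2 / 27) = q v"
      using eval_ternary_fps_eq_choose_3n_fps[OF norm_scaled_square_less[OF sin_S[OF that]]]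
        sin_cos_squared_add[of v]
      unfolding q_def by algebra
    ultimately show ?thesis
      by simp
  qed
  have q': "(q has_field_derivative - ((1/3)\<^sup>2 * y v)) (at v within S)" if "v \<in> S" for v
  proof -
    note R = norm_less_fps_conv_radius_choose_3n[OF norm_scaled_square_less[OF sin_S[OF that]]]
    have "(q has_field_derivative
            - (cos v * eval_fps ternary_fps (4 * (sin v)\<^sup>2 / 27)
               + eval_fps (fps_deriv ternary_fps) (4 * (sin v)\<^sup>2 / 27) * (8/27 * sin v * cos v)
                 * sin v) / 9) (at v within S)"
      unfolding q_def
      by (intro DERIV_cdivide DERIV_minus DERIV_mult has_field_derivative_at_within[OF DERIV_sin]
          has_field_derivative_eval_fps_sin_squared R(3))
    moreover have "- (cos v * eval_fps ternary_fps (4 * (sin v)\<^sup>2 / 27)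
               + eval_fps (fps_deriv ternary_fps) (4 * (sin v)\<^sup>2 / 27) * (8/27 * sin v * cos v)
                 * sin v) / 9 = - ((1/3)\<^sup>2 * y v)"
      using eval_choose_3n_fps_eq_ternary_fps[OF norm_scaled_square_less[OF sin_S[OF that]]]
      unfolding y_def by algebra
    ultimately show ?thesis
      by simp
  qed
  have "1/3 * y x = 1/3 * y 0 * cos (1/3 * x) + q 0 * sin (1/3 * x)"
    using harmonic_oscillator_solution[OF assms(1-3) y' q'] .
  moreover have "y 0 = 1" "q 0 = 0"
    by (simp_all add: y_def q_def eval_fps_at_0 choose_3n_fps_def)
  ultimately show ?thesis
    by (simp add: y_def)
qed

lemma eval_fps_X_mult_G_fps_sin_squared:
  fixes x :: "'a :: {real_normed_field, banach}"
  assumes "convex S" "0 \<in> S" "x \<in> S" and sin_S: "\<And>v. v \<in> S \<Longrightarrow> norm (sin v) < 1"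
  shows "eval_fps (fps_X * G_fps) (4 * (sin x)\<^sup>2 / 27)
           = 2/9 * (1 - cos (4 * x / 3)) + 4/9 * (1 - cos (2 * x / 3))"
proof -
  define V where "V v = eval_fps (fps_X * G_fps) (4 * (sin v)\<^sup>2 / 27)
                        - (2/9 * (1 - cos (4 * v / 3)) + 4/9 * (1 - cos (2 * v / 3)))" for v :: 'a
  have "(V has_field_derivative 0) (at v within S)" if "v \<in> S" for v
  proof -
    have "norm (4 * (sin v)\<^sup>2 / 27) < fps_conv_radius (fps_X * G_fps :: 'a fps)"
      using norm_less_fps_conv_radius_choose_3n(5)[OF norm_scaled_square_less[OF sin_S[OF that]]]
      by (simp only: fps_conv_radius_fps_X_mult)
    note R = norm_less_fps_conv_radius_choose_3n[OF norm_scaled_square_less[OF sin_S[OF that]]] this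
    have "(V has_field_derivative
            eval_fps (fps_deriv (fps_X * G_fps)) (4 * (sin v)\<^sup>2 / 27) * (8/27 * sin v * cos v)
            - (8/27 * sin (4 * v / 3) + 8/27 * sin (2 * v / 3))) (at v within S)"
      unfolding V_def
      by (intro DERIV_diff has_field_derivative_eval_fps_sin_squared R(6))
         (auto intro!: derivative_eq_intros)
    also have "eval_fps (fps_deriv (fps_X * G_fps)) (4 * (sin v)\<^sup>2 / 27) * (8/27 * sin v * cos v)
             = 16/27 * sin v * (eval_fps choose_3n_fps (4 * (sin v)\<^sup>2 / 27) * cos v)"
      by (simp only: fps_deriv_fps_X_mult_G_fps eval_fps_numeral_mult[OF R(1)]) simp
    also have "\<dots> = 16/27 * sin v * cos (v / 3)"
      by (simp only: eval_choose_3n_fps_sin_squared[OF assms(1,2) that sin_S])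
    also have "8/27 * sin (4 * v / 3) + 8/27 * sin (2 * v / 3) = 16/27 * sin v * cos (v / 3)"
      by (simp only: distrib_left [symmetric] sin_add_sin_third) simp
    finally show ?thesis
      by simp
  qed
  then obtain c where "\<forall>v\<in>S. V v = c"
    using has_field_derivative_zero_constant[OF \<open>convex S\<close>] by blast
  then have "V x = V 0"
    using assms(2,3) by simp
  also have "V 0 = 0"
    by (simp add: V_def eval_fps_at_0)
  finally show ?thesis
    by (simp add: V_def)
qed

lemma cos_quadruple_cos_double_eq:
  fixes a :: "'a :: {real_normed_field, banach}"
  shows "2/9 * (1 - cos (4 * a)) + 4/9 * (1 - cos (2 * a)) = 8/9 * (1 - (cos a)\<^sup>2) * (2 * (cos a)\<^sup>2 + 1)"
proof -
  have cos2: "cos (2 * a) = 2 * (cos a)\<^sup>2 - 1"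
    by (rule cos_double_cos)
  have "cos (4 * a) = 2 * (cos (2 * a))\<^sup>2 - 1"
    using cos_double_cos[of "2 * a"] by simp
  then have cos4: "cos (4 * a) = 2 * (2 * (cos a)\<^sup>2 - 1)\<^sup>2 - 1"
    unfolding cos2 .
  show ?thesis
    unfolding cos2 cos4 by (simp add: algebra_simps power2_eq_square)
qed

lemma eval_G_fps_Arcsin:
  fixes w :: complex
  assumes "norm w < 1" "w \<noteq> 0"
  defines "c \<equiv> cos (Arcsin w / 3)"
  shows "eval_fps G_fps (4 * w\<^sup>2 / 27) = (12 * c\<^sup>2 + 6) / (4 * c\<^sup>2 - 1)\<^sup>2"
proof -
  define \<alpha> where "\<alpha> = Arcsin w / 3"
  define g where "g = eval_fps G_fps (4 * w\<^sup>2 / 27)"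
  have "4 * w\<^sup>2 / 27 * g = eval_fps (fps_X * G_fps) (4 * (sin (Arcsin w))\<^sup>2 / 27)"
    unfolding g_def sin_Arcsin
    using norm_less_fps_conv_radius_choose_3n(5)[OF norm_scaled_square_less[OF assms(1)]]
    by (rule eval_fps_fps_X_mult [symmetric])
  also have "\<dots> = 2/9 * (1 - cos (4 * Arcsin w / 3)) + 4/9 * (1 - cos (2 * Arcsin w / 3))"
    by (rule eval_fps_X_mult_G_fps_sin_squared[where S = "closed_segment 0 (Arcsin w)"])
       (auto intro: norm_sin_closed_segment_Arcsin[OF assms(1)])
  also have "\<dots> = 8/9 * (1 - c\<^sup>2) * (2 * c\<^sup>2 + 1)"
    using cos_quadruple_cos_double_eq[of \<alpha>] by (simp add: c_def \<alpha>_def)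
  finally have G: "4 * w\<^sup>2 / 27 * g = 8/9 * (1 - c\<^sup>2) * (2 * c\<^sup>2 + 1)" .
  have "w = sin \<alpha> * (4 * c\<^sup>2 - 1)"
    using sin_triple[of \<alpha>] by (simp add: \<alpha>_def c_def)
  then have w: "w\<^sup>2 = (1 - c\<^sup>2) * (4 * c\<^sup>2 - 1)\<^sup>2"
    using sin_squared_eq[of \<alpha>] unfolding c_def \<alpha>_def by algebra
  with assms(2) have "1 - c\<^sup>2 \<noteq> 0" "4 * c\<^sup>2 - 1 \<noteq> 0"
    by auto
  moreover have "(1 - c\<^sup>2) * ((4 * c\<^sup>2 - 1)\<^sup>2 * g - (12 * c\<^sup>2 + 6)) = 0"
    using G unfolding w by algebra
  ultimately show ?thesis
    unfolding g_def [symmetric] by (simp add: eq_divide_eq mult.commute)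
qed

theorem mainTheorem1:
  fixes z :: complex
  assumes "norm z < 4/27"
  defines "\<alpha> \<equiv> Arcsin (csqrt (27 * z / 4)) / 3"
  shows "(\<lambda>n. of_nat ((3*n) choose n) * (2 * z ^ n) / of_nat (n + 1))
           sums ((12 * (cos \<alpha>)\<^sup>2 + 6) / (4 * (cos \<alpha>)\<^sup>2 - 1)\<^sup>2)"
proof -
  have "(\<lambda>n. fps_nth G_fps n * z ^ n) sums eval_fps G_fps z"
    using norm_less_fps_conv_radius_choose_3n(5)[OF assms(1)] by (rule sums_eval_fps)
  moreover have "eval_fps G_fps z = (12 * (cos \<alpha>)\<^sup>2 + 6) / (4 * (cos \<alpha>)\<^sup>2 - 1)\<^sup>2"
  proof (cases "z = 0")
    case True
    then show ?thesis
      by (simp add: \<alpha>_def eval_fps_at_0 G_fps_def)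
  next
    case False
    define w where "w = csqrt (27 * z / 4)"
    have "norm w < 1" "w \<noteq> 0" "4 * w\<^sup>2 / 27 = z"
      using assms(1) False by (simp_all add: w_def norm_divide norm_csqrt)
    then show ?thesis
      using eval_G_fps_Arcsin[of w] by (simp add: \<alpha>_def w_def)
  qed
  moreover have "(\<lambda>n. fps_nth G_fps n * z ^ n)
      = (\<lambda>n. of_nat ((3*n) choose n) * (2 * z ^ n) / of_nat (n + 1))"
    by (simp add: fun_eq_iff G_fps_def)
  ultimately show ?thesis
    by simp
qed

end
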